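(* Let $q\in[0,1)$, $a\in\mathbb D$, $b_a(z)=\frac{z-a}{1-z\overline a}$ and $b_{a,q}(z)=b_a(\sqrt{1-q}\,z)$. Then the operator $M_{b_{a,q}}$ of multiplication by $b_{a,q}$ is a contraction from $\mathbf H_{2,q}$ into itself; equivalently, the kernel $(1-b_{a,q}(z)\overline{b_{a,q}(w)})E_q(z\overline w)$ is positive definite on $|z|,|w|<1/\sqrt{1-q}$.
   Context: $[0]_q=1$, $[k]_q=1+q+\cdots+q^{k-1}$ ($k\ge1$), $[k]_q!=\prod_{j=1}^k[j]_q$, $[0]_q!=1$. $E_q(x)=\sum_{k\ge0}x^k/[k]_q!=\prod_{j=0}^\infty(1-(1-q)q^jx)^{-1}$ for $|x|<1/(1-q)$. $\mathbf H_{2,q}$ is the reproducing kernel Hilbert space with kernel $E_q(z\overline w)$, consisting of power series $\sum_k a_kz^k$ with $\sum_k[k]_q!|a_k|^2<\infty$; its elements are analytic in $|z|<1/\sqrt{1-q}$. *)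

theory Defs
  imports "HOL-Analysis.Analysis"
begin

definition qint :: "real \<Rightarrow> nat \<Rightarrow> real" where
  "qint q k = (if k = 0 then 1 else (\<Sum>j<k. q ^ j))"

definition qfact :: "real \<Rightarrow> nat \<Rightarrow> real" where
  "qfact q k = (\<Prod>j\<in>{1..k}. qint q j)"

definition Eq :: "real \<Rightarrow> complex \<Rightarrow> complex" where
  "Eq q x = (\<Sum>k. x ^ k / complex_of_real (qfact q k))"

definition blaschke :: "complex \<Rightarrow> complex \<Rightarrow> complex" where
  "blaschke a z = (z - a) / (1 - z * cnj a)"

definition blaschke_q :: "complex \<Rightarrow> real \<Rightarrow> complex \<Rightarrow> complex" where
  "blaschke_q a q z = blaschke a (complex_of_real (sqrt (1 - q)) * z)"

text \<open>Elements of H_{2,q}, represented by their Taylor coefficient sequences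
  (sum_k a_k z^k with sum_k [k]_q! |a_k|^2 < infinity), and the squared norm.\<close>
definition H2q :: "real \<Rightarrow> (nat \<Rightarrow> complex) set" where
  "H2q q = {c. summable (\<lambda>k. qfact q k * (cmod (c k))\<^sup>2)}"

definition H2q_norm :: "real \<Rightarrow> (nat \<Rightarrow> complex) \<Rightarrow> real" where
  "H2q_norm q c = sqrt (\<Sum>k. qfact q k * (cmod (c k))\<^sup>2)"

end

theory Submission
  imports Defs
begin

text \<open>The Taylor coefficients \<open>g\<close> of \<open>b\<^sub>a\<^sub>,\<^sub>q f\<close> satisfy \<open>g + a f = S (f + cnj a g)\<close>, where \<open>S\<close> is
  multiplication by \<open>sqrt (1 - q) z\<close>. The operator \<open>S\<close> is a contraction of \<open>H\<^sub>2\<^sub>,\<^sub>q\<close>, and the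
  pointwise identity \<open>|g + a f|\<^sup>2 - |f + cnj a g|\<^sup>2 = (1 - |a|\<^sup>2) (|g|\<^sup>2 - |f|\<^sup>2)\<close> turns this into
  \<open>\<parallel>g\<parallel> \<le> \<parallel>f\<parallel>\<close>.

  Expanding \<open>E\<^sub>q\<close>, the quadratic form of the kernel equals
  \<open>\<Sum>\<^sub>k (|\<alpha>\<^sub>k|\<^sup>2 - |\<beta>\<^sub>k|\<^sup>2) / [k]\<^sub>q!\<close> with \<open>\<alpha>\<^sub>k = \<Sum>\<^sub>i c\<^sub>i z\<^sub>i\<^sup>k\<close> and
  \<open>\<beta>\<^sub>k = \<Sum>\<^sub>i c\<^sub>i b\<^sub>a\<^sub>,\<^sub>q(z\<^sub>i) z\<^sub>i\<^sup>k\<close>; its nonnegativity is the dual statement of the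
  contraction property, obtained by testing it against truncations of \<open>\<Sum>\<^sub>k cnj \<beta>\<^sub>k z\<^sup>k / [k]\<^sub>q!\<close>.\<close>

lemma qint_ge_1:
  assumes "0 \<le> q"
  shows "1 \<le> qint q k"
proof (cases k)
  case (Suc m)
  have "(\<Sum>j<Suc m. q ^ j) = 1 + (\<Sum>j<m. q ^ Suc j)"
    by (subst sum.lessThan_Suc_shift) simp
  moreover have "0 \<le> (\<Sum>j<m. q ^ Suc j)"
    using assms by (intro sum_nonneg) simp
  ultimately show ?thesis
    using Suc by (simp add: qint_def)
qed (simp add: qint_def)

lemma qfact_pos: "0 \<le> q \<Longrightarrow> 0 < qfact q k"
  unfolding qfact_def by (intro prod_pos) (meson qint_ge_1 less_le_trans zero_less_one)

lemma qfact_Suc: "qfact q (Suc k) = qfact q k * qint q (Suc k)"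
  unfolding qfact_def by (simp add: prod.nat_ivl_Suc' mult.commute)

lemma qint_Suc: "q < 1 \<Longrightarrow> qint q (Suc k) = (1 - q ^ Suc k) / (1 - q)"
  unfolding qint_def using one_diff_power_eq[of q "Suc k"] by simp

lemma one_minus_q_mult_qfact_Suc:
  "q < 1 \<Longrightarrow> (1 - q) * qfact q (Suc k) = (1 - q ^ Suc k) * qfact q k"
  by (simp add: qfact_Suc qint_Suc)

text \<open>The ratio of consecutive terms is \<open>r / [k + 1]\<^sub>q\<close>, which tends to \<open>r (1 - q) < 1\<close>.\<close>
lemma summable_power_divide_qfact:
  assumes q: "0 \<le> q" "q < 1" and r: "0 \<le> r" "r * (1 - q) < 1"
  shows "summable (\<lambda>k. r ^ k / qfact q k)"
proof -
  define c where "c = (1 + r * (1 - q)) / 2"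
  have "0 \<le> r * (1 - q)" using r q by simp
  then have c1: "c < 1" and c0: "0 < c" and rc: "r * (1 - q) < c"
    using r(2) unfolding c_def by auto
  have "(\<lambda>k. q ^ Suc k) \<longlonglongrightarrow> 0"
    using q by (intro LIMSEQ_Suc LIMSEQ_power_zero) auto
  moreover have "0 < 1 - r * (1 - q) / c" using rc c0 by (simp add: field_simps)
  ultimately have "eventually (\<lambda>k. q ^ Suc k < 1 - r * (1 - q) / c) sequentially"
    by (rule order_tendstoD)
  then obtain N where N: "\<And>k. k \<ge> N \<Longrightarrow> q ^ Suc k < 1 - r * (1 - q) / c"
    by (auto simp: eventually_sequentially)
  show ?thesis
  proof (rule summable_ratio_test[OF c1])
    fix k assume "k \<ge> N"
    then have "r * (1 - q) / c \<le> 1 - q ^ Suc k" using N by force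
    then have "r \<le> c * qint q (Suc k)"
      using c0 q by (simp add: qint_Suc field_simps)
    then have "r / qint q (Suc k) \<le> c"
      using qint_ge_1[OF q(1), of "Suc k"] by (simp add: field_simps)
    moreover have "norm (r ^ Suc k / qfact q (Suc k)) = r / qint q (Suc k) * norm (r ^ k / qfact q k)"
      using qfact_pos[OF q(1)] qint_ge_1[OF q(1), of "Suc k"] r by (simp add: qfact_Suc abs_mult)
    ultimately show "norm (r ^ Suc k / qfact q (Suc k)) \<le> c * norm (r ^ k / qfact q k)"
      by (metis mult_right_mono norm_ge_zero)
  qed
qed

lemma two_mult_le_weighted_sum_squares:
  fixes w x y :: real
  assumes "0 < w"
  shows "2 * x * y \<le> w * x\<^sup>2 + y\<^sup>2 / w"
proof -
  have "0 \<le> (w * x - y)\<^sup>2 / w" using assms by simp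
  also have "\<dots> = w * x\<^sup>2 + y\<^sup>2 / w - 2 * x * y"
    using assms by (simp add: power2_eq_square field_simps)
  finally show ?thesis by simp
qed

lemma
  fixes x y :: "nat \<Rightarrow> complex" and w :: "nat \<Rightarrow> real"
  assumes w: "\<And>k. 0 < w k"
    and x: "summable (\<lambda>k. w k * (cmod (x k))\<^sup>2)"
    and y: "summable (\<lambda>k. (cmod (y k))\<^sup>2 / w k)"
  shows summable_norm_weighted_pairing: "summable (\<lambda>k. norm (x k * y k))"
    and norm_suminf_weighted_pairing_le:
      "2 * cmod (\<Sum>k. x k * y k) \<le> (\<Sum>k. w k * (cmod (x k))\<^sup>2) + (\<Sum>k. (cmod (y k))\<^sup>2 / w k)"
proof -
  have bound: "2 * norm (x k * y k) \<le> w k * (cmod (x k))\<^sup>2 + (cmod (y k))\<^sup>2 / w k" for k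
    using two_mult_le_weighted_sum_squares[OF w] by (simp add: norm_mult mult.assoc)
  have sum: "summable (\<lambda>k. w k * (cmod (x k))\<^sup>2 + (cmod (y k))\<^sup>2 / w k)"
    using x y by (rule summable_add)
  have summable_2: "summable (\<lambda>k. 2 * norm (x k * y k))"
    by (rule summable_comparison_test'[OF sum]) (use bound in auto)
  then show norm: "summable (\<lambda>k. norm (x k * y k))"
    by (simp add: summable_cmult_iff)
  have "2 * cmod (\<Sum>k. x k * y k) \<le> (\<Sum>k. 2 * norm (x k * y k))"
    using summable_norm[OF norm] suminf_mult[OF norm, of 2] by simp
  also have "\<dots> \<le> (\<Sum>k. w k * (cmod (x k))\<^sup>2 + (cmod (y k))\<^sup>2 / w k)"
    by (rule suminf_le[OF bound summable_2 sum])
  finally show "2 * cmod (\<Sum>k. x k * y k) \<le> (\<Sum>k. w k * (cmod (x k))\<^sup>2) + (\<Sum>k. (cmod (y k))\<^sup>2 / w k)"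
    by (simp add: suminf_add[OF x y])
qed

lemma qdisc_scaled_norm_lt:
  assumes "q < 1" "cmod z < 1 / sqrt (1 - q)"
  shows "sqrt (1 - q) * cmod z < 1"
  using assms by (simp add: field_simps)

lemma qdisc_norm_mult_lt:
  assumes "q < 1" "cmod z < 1 / sqrt (1 - q)" "cmod w < 1 / sqrt (1 - q)"
  shows "cmod z * cmod w * (1 - q) < 1"
proof -
  have "(sqrt (1 - q) * cmod z) * (sqrt (1 - q) * cmod w) < 1 * 1"
    using assms qdisc_scaled_norm_lt by (intro mult_strict_mono') simp_all
  then show ?thesis
    using assms(1) by (simp add: algebra_simps)
qed

lemma summable_norm_H2q_power_series:
  assumes q: "0 \<le> q" "q < 1" and f: "f \<in> H2q q" and z: "cmod z < 1 / sqrt (1 - q)"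
  shows "summable (\<lambda>k. norm (f k * z ^ k))"
proof (rule summable_norm_weighted_pairing)
  show "summable (\<lambda>k. qfact q k * (cmod (f k))\<^sup>2)"
    using f by (simp add: H2q_def)
  show "summable (\<lambda>k. (cmod (z ^ k))\<^sup>2 / qfact q k)"
    using summable_power_divide_qfact[OF q, of "cmod z * cmod z"] qdisc_norm_mult_lt[OF q(2) z z]
    by (simp add: norm_power power_mult_distrib power2_eq_square)
qed (rule qfact_pos[OF q(1)])

text \<open>Multiplication by \<open>sqrt (1 - q) z\<close> is a contraction of \<open>H\<^sub>2\<^sub>,\<^sub>q\<close>, because
  \<open>(1 - q) [k + 1]\<^sub>q! = (1 - q\<^sup>k\<^sup>+\<^sup>1) [k]\<^sub>q! \<le> [k]\<^sub>q!\<close>.\<close>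
lemma qfact_weighted_shift_le:
  assumes q: "0 \<le> q" "q < 1"
    and Y0: "Y 0 = 0" and Y_Suc: "\<And>k. Y (Suc k) = of_real (sqrt (1 - q)) * X k"
  shows "(\<Sum>k<N. qfact q k * (cmod (Y k))\<^sup>2) \<le> (\<Sum>k<N. qfact q k * (cmod (X k))\<^sup>2)"
proof (cases N)
  case (Suc M)
  have "(\<Sum>k<Suc M. qfact q k * (cmod (Y k))\<^sup>2) = (\<Sum>k<M. qfact q (Suc k) * (cmod (Y (Suc k)))\<^sup>2)"
    by (subst sum.lessThan_Suc_shift) (simp add: Y0)
  also have "\<dots> = (\<Sum>k<M. (1 - q ^ Suc k) * (qfact q k * (cmod (X k))\<^sup>2))"
    using q one_minus_q_mult_qfact_Suc[OF q(2)]
    by (intro sum.cong) (simp_all add: Y_Suc norm_mult power_mult_distrib mult.assoc mult.left_commute)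
  also have "\<dots> \<le> (\<Sum>k<M. qfact q k * (cmod (X k))\<^sup>2)"
  proof (intro sum_mono mult_left_le_one_le)
    show "0 \<le> qfact q k * (cmod (X k))\<^sup>2" for k
      using qfact_pos[OF q(1), of k] by simp
    show "1 - q ^ Suc k \<le> 1" and "0 \<le> 1 - q ^ Suc k" for k
      using q power_le_one[of q "Suc k"] by simp_all
  qed
  also have "\<dots> \<le> (\<Sum>k<Suc M. qfact q k * (cmod (X k))\<^sup>2)"
    using qfact_pos[OF q(1), of M] by simp
  finally show ?thesis using Suc by simp
qed simp

lemma norm_sq_diff_moebius_pair:
  fixes a f g :: complex
  shows "(cmod (g + a * f))\<^sup>2 - (cmod (f + cnj a * g))\<^sup>2 = (1 - (cmod a)\<^sup>2) * ((cmod g)\<^sup>2 - (cmod f)\<^sup>2)"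
proof -
  have "complex_of_real ((cmod (g + a * f))\<^sup>2 - (cmod (f + cnj a * g))\<^sup>2)
      = complex_of_real ((1 - (cmod a)\<^sup>2) * ((cmod g)\<^sup>2 - (cmod f)\<^sup>2))"
    unfolding of_real_diff of_real_mult of_real_1 complex_norm_square complex_cnj_add complex_cnj_mult
      complex_cnj_cnj
    by algebra
  then show ?thesis
    by (rule of_real_eq_iff[THEN iffD1])
qed

text \<open>Taylor coefficients of \<open>b\<^sub>a\<^sub>,\<^sub>q f\<close>, obtained by comparing coefficients in
  \<open>g(z) + a f(z) = s z (f(z) + cnj a g(z))\<close> with \<open>s = sqrt (1 - q)\<close>.\<close>
primrec blaschke_coeffs :: "complex \<Rightarrow> real \<Rightarrow> (nat \<Rightarrow> complex) \<Rightarrow> nat \<Rightarrow> complex" where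
  "blaschke_coeffs a q f 0 = - a * f 0"
| "blaschke_coeffs a q f (Suc k) =
     - a * f (Suc k) + of_real (sqrt (1 - q)) * (f k + cnj a * blaschke_coeffs a q f k)"

lemma blaschke_coeffs_partial_norm_le:
  assumes q: "0 \<le> q" "q < 1" and a: "cmod a < 1"
  shows "(\<Sum>k<N. qfact q k * (cmod (blaschke_coeffs a q f k))\<^sup>2) \<le> (\<Sum>k<N. qfact q k * (cmod (f k))\<^sup>2)"
proof -
  define g where "g = blaschke_coeffs a q f"
  have "(\<Sum>k<N. qfact q k * (cmod (g k + a * f k))\<^sup>2) \<le> (\<Sum>k<N. qfact q k * (cmod (f k + cnj a * g k))\<^sup>2)"
    by (rule qfact_weighted_shift_le[OF q]) (simp_all add: g_def)
  moreover have "(\<Sum>k<N. qfact q k * (cmod (g k + a * f k))\<^sup>2) - (\<Sum>k<N. qfact q k * (cmod (f k + cnj a * g k))\<^sup>2)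
      = (1 - (cmod a)\<^sup>2) * (\<Sum>k<N. qfact q k * ((cmod (g k))\<^sup>2 - (cmod (f k))\<^sup>2))"
    unfolding sum_subtractf[symmetric] sum_distrib_left
    by (intro sum.cong refl) (simp add: right_diff_distrib[symmetric] norm_sq_diff_moebius_pair)
  ultimately have "(1 - (cmod a)\<^sup>2) * (\<Sum>k<N. qfact q k * ((cmod (g k))\<^sup>2 - (cmod (f k))\<^sup>2)) \<le> 0"
    by linarith
  moreover have "0 < 1 - (cmod a)\<^sup>2"
    using a by (simp add: power_less_one_iff abs_square_less_1)
  ultimately have "(\<Sum>k<N. qfact q k * ((cmod (g k))\<^sup>2 - (cmod (f k))\<^sup>2)) \<le> 0"
    by (simp add: mult_le_0_iff)
  then show ?thesis
    unfolding g_def[symmetric] by (simp add: sum_subtractf right_diff_distrib)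
qed

lemma
  assumes q: "0 \<le> q" "q < 1" and a: "cmod a < 1" and f: "f \<in> H2q q"
  shows blaschke_coeffs_in_H2q: "blaschke_coeffs a q f \<in> H2q q"
    and H2q_norm_blaschke_coeffs_le: "H2q_norm q (blaschke_coeffs a q f) \<le> H2q_norm q f"
proof -
  define g where "g = blaschke_coeffs a q f"
  have sf: "summable (\<lambda>k. qfact q k * (cmod (f k))\<^sup>2)"
    using f by (simp add: H2q_def)
  have nonneg: "0 \<le> qfact q k * (cmod (h k))\<^sup>2" for h k
    using qfact_pos[OF q(1), of k] by simp
  have partial: "(\<Sum>k<N. qfact q k * (cmod (g k))\<^sup>2) \<le> (\<Sum>k. qfact q k * (cmod (f k))\<^sup>2)" for N
    unfolding g_def using blaschke_coeffs_partial_norm_le[OF q a] sum_le_suminf[OF sf] nonneg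
    by (meson finite_lessThan order_trans)
  have sg: "summable (\<lambda>k. qfact q k * (cmod (g k))\<^sup>2)"
    using nonneg partial by (rule summableI_nonneg_bounded)
  then show "blaschke_coeffs a q f \<in> H2q q"
    by (simp add: H2q_def g_def)
  show "H2q_norm q (blaschke_coeffs a q f) \<le> H2q_norm q f"
    using suminf_le_const[OF sg partial] by (simp add: H2q_norm_def g_def)
qed

lemma blaschke_q_mult_power_series:
  assumes q: "0 \<le> q" "q < 1" and a: "cmod a < 1" and f: "f \<in> H2q q"
    and z: "cmod z < 1 / sqrt (1 - q)"
  shows "blaschke_q a q z * (\<Sum>k. f k * z ^ k) = (\<Sum>k. blaschke_coeffs a q f k * z ^ k)"
proof -
  define s where "s = complex_of_real (sqrt (1 - q))"
  define g where "g = blaschke_coeffs a q f"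
  define F where "F = (\<Sum>k. f k * z ^ k)"
  define G where "G = (\<Sum>k. g k * z ^ k)"
  have F_sums: "(\<lambda>k. f k * z ^ k) sums F"
    unfolding F_def using summable_norm_H2q_power_series[OF q f z]
    by (rule summable_sums[OF summable_norm_cancel])
  have G_sums: "(\<lambda>k. g k * z ^ k) sums G"
    unfolding G_def g_def using summable_norm_H2q_power_series[OF q blaschke_coeffs_in_H2q[OF q a f] z]
    by (rule summable_sums[OF summable_norm_cancel])
  have "(\<lambda>k. (g k + a * f k) * z ^ k) sums (G + a * F)"
    using sums_add[OF G_sums sums_mult[OF F_sums, of a]] by (simp add: distrib_right mult.assoc)
  then have "(\<lambda>k. (g (Suc k) + a * f (Suc k)) * z ^ Suc k) sums (G + a * F)"
    by (subst sums_Suc_iff) (simp add: g_def)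
  moreover have "(\<lambda>k. (g (Suc k) + a * f (Suc k)) * z ^ Suc k) = (\<lambda>k. s * z * (f k * z ^ k + cnj a * (g k * z ^ k)))"
    by (simp add: g_def s_def ring_distribs mult_ac)
  moreover have "(\<lambda>k. s * z * (f k * z ^ k + cnj a * (g k * z ^ k))) sums (s * z * (F + cnj a * G))"
    by (intro sums_mult sums_add F_sums G_sums)
  ultimately have "G + a * F = s * z * (F + cnj a * G)"
    by (metis sums_unique2)
  then have "G * (1 - s * z * cnj a) = (s * z - a) * F"
    by algebra
  moreover have "cmod (s * z * cnj a) < 1"
  proof -
    have "cmod (s * z * cnj a) = (sqrt (1 - q) * cmod z) * cmod a"
      using q by (simp add: s_def norm_mult)
    also have "\<dots> < 1 * 1"
      using qdisc_scaled_norm_lt[OF q(2) z] a q by (intro mult_strict_mono') simp_all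
    finally show ?thesis by simp
  qed
  then have "1 - s * z * cnj a \<noteq> 0"
    by auto
  ultimately have "G = (s * z - a) / (1 - s * z * cnj a) * F"
    by (simp add: field_simps)
  then show ?thesis
    by (simp add: blaschke_q_def blaschke_def s_def F_def G_def g_def mult.commute)
qed

definition contractive_multiplier :: "real \<Rightarrow> (complex \<Rightarrow> complex) \<Rightarrow> bool" where
  "contractive_multiplier q \<phi> \<longleftrightarrow>
     (\<forall>f \<in> H2q q. \<exists>g \<in> H2q q.
        (\<forall>z. cmod z < 1 / sqrt (1 - q) \<longrightarrow> \<phi> z * (\<Sum>k. f k * z ^ k) = (\<Sum>k. g k * z ^ k))
        \<and> H2q_norm q g \<le> H2q_norm q f)"

lemma contractive_multiplier_blaschke_q:
  assumes "0 \<le> q" "q < 1" "cmod a < 1"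
  shows "contractive_multiplier q (blaschke_q a q)"
  unfolding contractive_multiplier_def
  using blaschke_coeffs_in_H2q[OF assms] H2q_norm_blaschke_coeffs_le[OF assms]
    blaschke_q_mult_power_series[OF assms] by blast

lemma Eq_gram_sums:
  fixes z c :: "nat \<Rightarrow> complex"
  assumes q: "0 \<le> q" "q < 1" and z: "\<forall>i<n. cmod (z i) < 1 / sqrt (1 - q)"
  shows "(\<lambda>k. complex_of_real ((cmod (\<Sum>i<n. c i * z i ^ k))\<^sup>2 / qfact q k))
           sums (\<Sum>i<n. \<Sum>j<n. c i * cnj (c j) * Eq q (z i * cnj (z j)))"
proof -
  have Eq_sums: "(\<lambda>k. (z i * cnj (z j)) ^ k / complex_of_real (qfact q k)) sums Eq q (z i * cnj (z j))"
    if "i < n" "j < n" for i j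
  proof -
    have "summable (\<lambda>k. (cmod (z i) * cmod (z j)) ^ k / qfact q k)"
      using summable_power_divide_qfact[OF q] qdisc_norm_mult_lt[OF q(2)] z that by simp
    then have "summable (\<lambda>k. (z i * cnj (z j)) ^ k / complex_of_real (qfact q k))"
      by (rule summable_comparison_test')
        (simp add: norm_mult norm_power norm_divide abs_of_pos[OF qfact_pos[OF q(1)]])
    then show ?thesis
      unfolding Eq_def by (rule summable_sums)
  qed
  have gram_term: "(\<Sum>i<n. \<Sum>j<n. c i * cnj (c j) * ((z i * cnj (z j)) ^ k / complex_of_real (qfact q k)))
      = complex_of_real ((cmod (\<Sum>i<n. c i * z i ^ k))\<^sup>2 / qfact q k)" for k
  proof -
    have "(\<Sum>i<n. \<Sum>j<n. c i * cnj (c j) * ((z i * cnj (z j)) ^ k / complex_of_real (qfact q k)))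
        = (\<Sum>i<n. \<Sum>j<n. (c i * z i ^ k) * cnj (c j * z j ^ k)) / complex_of_real (qfact q k)"
      by (simp add: sum_divide_distrib power_mult_distrib mult_ac)
    also have "\<dots> = (\<Sum>i<n. c i * z i ^ k) * cnj (\<Sum>j<n. c j * z j ^ k) / complex_of_real (qfact q k)"
      by (simp only: cnj_sum sum_product)
    also have "\<dots> = complex_of_real ((cmod (\<Sum>i<n. c i * z i ^ k))\<^sup>2 / qfact q k)"
      by (simp only: of_real_divide complex_norm_square)
    finally show ?thesis .
  qed
  have "(\<lambda>k. \<Sum>i<n. \<Sum>j<n. c i * cnj (c j) * ((z i * cnj (z j)) ^ k / complex_of_real (qfact q k)))
      sums (\<Sum>i<n. \<Sum>j<n. c i * cnj (c j) * Eq q (z i * cnj (z j)))"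
    using Eq_sums by (intro sums_sum sums_mult) auto
  then show ?thesis
    by (simp only: gram_term)
qed

lemma
  fixes z c :: "nat \<Rightarrow> complex"
  assumes "0 \<le> q" "q < 1" and "\<forall>i<n. cmod (z i) < 1 / sqrt (1 - q)"
  shows summable_gram: "summable (\<lambda>k. (cmod (\<Sum>i<n. c i * z i ^ k))\<^sup>2 / qfact q k)"
    and Eq_quadratic_form_eq: "(\<Sum>i<n. \<Sum>j<n. c i * cnj (c j) * Eq q (z i * cnj (z j)))
           = complex_of_real (\<Sum>k. (cmod (\<Sum>i<n. c i * z i ^ k))\<^sup>2 / qfact q k)"
proof -
  note gram = Eq_gram_sums[OF assms, of c]
  then show summable: "summable (\<lambda>k. (cmod (\<Sum>i<n. c i * z i ^ k))\<^sup>2 / qfact q k)"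
    using sums_summable summable_complex_of_real by blast
  show "(\<Sum>i<n. \<Sum>j<n. c i * cnj (c j) * Eq q (z i * cnj (z j)))
      = complex_of_real (\<Sum>k. (cmod (\<Sum>i<n. c i * z i ^ k))\<^sup>2 / qfact q k)"
    by (rule sums_unique2[OF gram]) (simp only: sums_of_real_iff summable_sums[OF summable])
qed

lemma lincomb_power_series_eq:
  fixes c g z :: "nat \<Rightarrow> 'a :: {real_normed_algebra_1, comm_ring_1}" and n :: nat
  assumes "\<And>i. i < n \<Longrightarrow> summable (\<lambda>k. g k * z i ^ k)"
  shows "(\<Sum>i<n. c i * (\<Sum>k. g k * z i ^ k)) = (\<Sum>k. g k * (\<Sum>i<n. c i * z i ^ k))"
proof -
  have "(\<Sum>i<n. c i * (\<Sum>k. g k * z i ^ k)) = (\<Sum>i<n. \<Sum>k. c i * (g k * z i ^ k))"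
  proof (rule sum.cong[OF refl])
    fix i assume "i \<in> {..<n}"
    then have "summable (\<lambda>k. g k * z i ^ k)"
      using assms by simp
    then show "c i * (\<Sum>k. g k * z i ^ k) = (\<Sum>k. c i * (g k * z i ^ k))"
      by (simp add: suminf_mult)
  qed
  also have "\<dots> = (\<Sum>k. \<Sum>i<n. c i * (g k * z i ^ k))"
    using assms by (intro suminf_sum[symmetric] summable_mult) simp
  finally show ?thesis
    by (simp add: sum_distrib_left mult.left_commute)
qed

lemma multiplier_pairing_eq:
  fixes c z f g :: "nat \<Rightarrow> complex"
  assumes f_zero: "\<And>k. N \<le> k \<Longrightarrow> f k = 0"
    and g_summable: "\<And>i. i < n \<Longrightarrow> summable (\<lambda>k. g k * z i ^ k)"
    and g_eval: "\<And>i. i < n \<Longrightarrow> \<phi> (z i) * (\<Sum>k. f k * z i ^ k) = (\<Sum>k. g k * z i ^ k)"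
  shows "(\<Sum>k<N. f k * (\<Sum>i<n. c i * \<phi> (z i) * z i ^ k)) = (\<Sum>k. g k * (\<Sum>i<n. c i * z i ^ k))"
proof -
  have "(\<Sum>k<N. f k * (\<Sum>i<n. c i * \<phi> (z i) * z i ^ k))
      = (\<Sum>i<n. c i * (\<phi> (z i) * (\<Sum>k<N. f k * z i ^ k)))"
    by (simp add: sum_distrib_left sum.swap[of _ "{..<N}"] mult_ac)
  also have "\<dots> = (\<Sum>i<n. c i * (\<phi> (z i) * (\<Sum>k. f k * z i ^ k)))"
    using suminf_finite[of "{..<N}" "\<lambda>k. f k * z _ ^ k"] f_zero by simp
  also have "\<dots> = (\<Sum>i<n. c i * (\<Sum>k. g k * z i ^ k))"
    by (simp add: g_eval)
  also have "\<dots> = (\<Sum>k. g k * (\<Sum>i<n. c i * z i ^ k))"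
    by (rule lincomb_power_series_eq[OF g_summable])
  finally show ?thesis .
qed

text \<open>Duality: test the multiplier on \<open>f = \<Sum>\<^sub>k\<^sub><\<^sub>N cnj \<beta>\<^sub>k z\<^sup>k / [k]\<^sub>q!\<close>, whose squared norm
  is the partial sum \<open>A\<close> of the left-hand side. Moving \<open>\<phi>\<close> from \<open>f\<close> to \<open>g = \<phi> f\<close> turns
  \<open>A = \<Sum>\<^sub>k f\<^sub>k \<beta>\<^sub>k\<close> into \<open>\<Sum>\<^sub>k g\<^sub>k \<alpha>\<^sub>k\<close>, so \<open>2 A \<le> \<parallel>g\<parallel>\<^sup>2 + B \<le> A + B\<close>, where \<open>B\<close> is the
  right-hand side.\<close>
lemma contractive_multiplier_gram_le:
  fixes z c :: "nat \<Rightarrow> complex"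
  assumes q: "0 \<le> q" "q < 1" and \<phi>: "contractive_multiplier q \<phi>"
    and z: "\<forall>i<n. cmod (z i) < 1 / sqrt (1 - q)"
  shows "(\<Sum>k. (cmod (\<Sum>i<n. c i * \<phi> (z i) * z i ^ k))\<^sup>2 / qfact q k)
       \<le> (\<Sum>k. (cmod (\<Sum>i<n. c i * z i ^ k))\<^sup>2 / qfact q k)"
proof -
  define \<alpha> where "\<alpha> k = (\<Sum>i<n. c i * z i ^ k)" for k
  define \<beta> where "\<beta> k = (\<Sum>i<n. c i * \<phi> (z i) * z i ^ k)" for k
  define B where "B = (\<Sum>k. (cmod (\<alpha> k))\<^sup>2 / qfact q k)"
  have w: "0 < qfact q k" for k
    using qfact_pos[OF q(1)] .
  have sa: "summable (\<lambda>k. (cmod (\<alpha> k))\<^sup>2 / qfact q k)"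
    unfolding \<alpha>_def by (rule summable_gram[OF q z])
  have sb: "summable (\<lambda>k. (cmod (\<beta> k))\<^sup>2 / qfact q k)"
    unfolding \<beta>_def by (rule summable_gram[OF q z])
  show ?thesis
    unfolding \<alpha>_def[symmetric] \<beta>_def[symmetric] B_def[symmetric]
  proof (rule suminf_le_const[OF sb])
    fix N
    define A where "A = (\<Sum>k<N. (cmod (\<beta> k))\<^sup>2 / qfact q k)"
    define f where "f k = (if k < N then cnj (\<beta> k) / complex_of_real (qfact q k) else 0)" for k
    have f_norm: "qfact q k * (cmod (f k))\<^sup>2 = (if k < N then (cmod (\<beta> k))\<^sup>2 / qfact q k else 0)" for k
      using w[of k] by (simp add: f_def norm_divide power_divide power2_eq_square)
    have f_H2q: "f \<in> H2q q"
      unfolding H2q_def by (intro CollectI summable_finite[of "{..<N}"]) (simp_all add: f_def)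
    have f_norm_sum: "(\<Sum>k. qfact q k * (cmod (f k))\<^sup>2) = A"
      unfolding f_norm A_def by (subst suminf_finite[of "{..<N}"]) auto
    obtain g where g_H2q: "g \<in> H2q q"
      and g_eval: "\<And>i. i < n \<Longrightarrow> \<phi> (z i) * (\<Sum>k. f k * z i ^ k) = (\<Sum>k. g k * z i ^ k)"
      and g_norm: "H2q_norm q g \<le> H2q_norm q f"
      using \<phi> f_H2q z unfolding contractive_multiplier_def by blast
    have sg: "summable (\<lambda>k. qfact q k * (cmod (g k))\<^sup>2)"
      using g_H2q by (simp add: H2q_def)
    have g_norm_sum: "(\<Sum>k. qfact q k * (cmod (g k))\<^sup>2) \<le> A"
      using g_norm f_norm_sum by (simp add: H2q_norm_def)
    have "complex_of_real A = (\<Sum>k<N. f k * \<beta> k)"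
      unfolding A_def of_real_sum
      by (intro sum.cong refl) (simp add: f_def mult.commute flip: complex_norm_square)
    also have "\<dots> = (\<Sum>k. g k * \<alpha> k)"
      unfolding \<alpha>_def \<beta>_def
    proof (rule multiplier_pairing_eq[where \<phi> = \<phi>])
      show "f k = 0" if "N \<le> k" for k
        using that by (simp add: f_def)
      show "summable (\<lambda>k. g k * z i ^ k)" if "i < n" for i
        using summable_norm_H2q_power_series[OF q g_H2q] z that by (blast intro: summable_norm_cancel)
    qed (rule g_eval)
    finally have "A \<le> cmod (\<Sum>k. g k * \<alpha> k)"
      by (metis abs_ge_self norm_of_real)
    then show "A \<le> B"
      using norm_suminf_weighted_pairing_le[OF w sg sa] g_norm_sum unfolding B_def by linarith
  qed
qed

theorem proposition8p1:
  fixes q :: real and a :: complex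
  assumes "0 \<le> q" and "q < 1" and "cmod a < 1"
  shows "(\<forall>f \<in> H2q q. \<exists>g \<in> H2q q.
            (\<forall>z. cmod z < 1 / sqrt (1 - q) \<longrightarrow>
                 blaschke_q a q z * (\<Sum>k. f k * z ^ k) = (\<Sum>k. g k * z ^ k))
            \<and> H2q_norm q g \<le> H2q_norm q f)
       \<and> (\<forall>(n::nat) (z::nat \<Rightarrow> complex) (c::nat \<Rightarrow> complex).
            (\<forall>i<n. cmod (z i) < 1 / sqrt (1 - q)) \<longrightarrow>
            (let S = (\<Sum>i<n. \<Sum>j<n. c i * cnj (c j) *
                  ((1 - blaschke_q a q (z i) * cnj (blaschke_q a q (z j))) * Eq q (z i * cnj (z j))))
             in S \<in> \<real> \<and> 0 \<le> Re S))"
proof (intro conjI allI impI)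
  have b: "contractive_multiplier q (blaschke_q a q)"
    using contractive_multiplier_blaschke_q[OF assms] .
  then show "\<forall>f \<in> H2q q. \<exists>g \<in> H2q q.
      (\<forall>z. cmod z < 1 / sqrt (1 - q) \<longrightarrow> blaschke_q a q z * (\<Sum>k. f k * z ^ k) = (\<Sum>k. g k * z ^ k))
      \<and> H2q_norm q g \<le> H2q_norm q f"
    unfolding contractive_multiplier_def .
  fix n :: nat and z c :: "nat \<Rightarrow> complex"
  assume z: "\<forall>i<n. cmod (z i) < 1 / sqrt (1 - q)"
  define cb where "cb i = c i * blaschke_q a q (z i)" for i
  have "(\<Sum>i<n. \<Sum>j<n. c i * cnj (c j) *
          ((1 - blaschke_q a q (z i) * cnj (blaschke_q a q (z j))) * Eq q (z i * cnj (z j))))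
      = (\<Sum>i<n. \<Sum>j<n. c i * cnj (c j) * Eq q (z i * cnj (z j)))
        - (\<Sum>i<n. \<Sum>j<n. cb i * cnj (cb j) * Eq q (z i * cnj (z j)))"
    by (simp add: cb_def sum_subtractf[symmetric] algebra_simps)
  also have "\<dots> = complex_of_real ((\<Sum>k. (cmod (\<Sum>i<n. c i * z i ^ k))\<^sup>2 / qfact q k)
        - (\<Sum>k. (cmod (\<Sum>i<n. cb i * z i ^ k))\<^sup>2 / qfact q k))"
    unfolding of_real_diff Eq_quadratic_form_eq[OF assms(1,2) z] ..
  finally show "let S = (\<Sum>i<n. \<Sum>j<n. c i * cnj (c j) *
          ((1 - blaschke_q a q (z i) * cnj (blaschke_q a q (z j))) * Eq q (z i * cnj (z j))))
      in S \<in> \<real> \<and> 0 \<le> Re S"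
    using contractive_multiplier_gram_le[OF assms(1,2) b z, of c] by (simp add: cb_def)
qed

end
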